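(* Let $(X,(\cdot,\cdot))$ be a real finite-dimensional Hilbert space, let $\delta>0$, and let $L,G\in\mathfrak{L}_+(X)$ satisfy $\min\big(d_\sigma(L^{-1},G),\,d_\sigma(L,G^{-1})\big)\leqslant\delta$. Then the spectral radius of $I-LG$ satisfies $$\rho(I-LG)\leqslant\frac{e^\delta-1}{\delta}\,\min\big(d_\sigma(L^{-1},G),\,d_\sigma(L,G^{-1})\big).$$
   Context: $\mathfrak{L}_+(X)=\{T\in\mathfrak{L}(X):(Tu,u)>0\ \forall u\in X\setminus\{0\}\}$ (operators with positive definite symmetric part). For $S,T\in\mathfrak{L}_+(X)$, $W(S,T)=\{(S_{\mathbb C}w,w)/(T_{\mathbb C}w,w): w\in X^{\mathbb C}\setminus\{0\}\}$, where $X^{\mathbb C}$ is the complexification of $X$ and $T_{\mathbb C}(u+\mathbf{i}v)=Tu+\mathbf{i}Tv$; the spectral distance is $d_\sigma(S,T)=\sup\{|\ln z|: z\in W(S,T)\}$ with $\ln$ the principal branch on $\mathbb{C}\setminus(-\infty,0]$. *)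

theory Defs
  imports "HOL-Analysis.Analysis"
begin

text \<open>The complexification of a real space 'a is modelled as pairs (u,v), standing for u + i v.\<close>

definition cplx_op :: "('a \<Rightarrow> 'a) \<Rightarrow> 'a \<times> 'a \<Rightarrow> 'a \<times> 'a" where
  "cplx_op T w = (T (fst w), T (snd w))"

text \<open>Complex inner product on the complexification, linear in the first argument:
  (a + i b, c + i d) = (a,c) + (b,d) + i ((b,c) - (a,d)).\<close>
definition cinner :: "'a::real_inner \<times> 'a \<Rightarrow> 'a \<times> 'a \<Rightarrow> complex" where
  "cinner w z = Complex (inner (fst w) (fst z) + inner (snd w) (snd z))
                        (inner (snd w) (fst z) - inner (fst w) (snd z))"

definition cscale :: "complex \<Rightarrow> 'a::real_vector \<times> 'a \<Rightarrow> 'a \<times> 'a" where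
  "cscale c w = (Re c *\<^sub>R fst w - Im c *\<^sub>R snd w, Re c *\<^sub>R snd w + Im c *\<^sub>R fst w)"

definition pos_ops :: "('a::real_inner \<Rightarrow> 'a) set" where
  "pos_ops = {T. linear T \<and> (\<forall>u. u \<noteq> 0 \<longrightarrow> inner (T u) u > 0)}"

definition num_range :: "('a::real_inner \<Rightarrow> 'a) \<Rightarrow> ('a \<Rightarrow> 'a) \<Rightarrow> complex set" where
  "num_range S T = {cinner (cplx_op S w) w / cinner (cplx_op T w) w | w. w \<noteq> (0, 0)}"

definition spec_dist :: "('a::real_inner \<Rightarrow> 'a) \<Rightarrow> ('a \<Rightarrow> 'a) \<Rightarrow> real" where
  "spec_dist S T = Sup ((\<lambda>z. cmod (Ln z)) ` num_range S T)"

text \<open>Spectrum of a real operator = eigenvalues of its complexification (finite dimension).\<close>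
definition cspectrum :: "('a::real_vector \<Rightarrow> 'a) \<Rightarrow> complex set" where
  "cspectrum T = {c. \<exists>w. w \<noteq> (0, 0) \<and> cplx_op T w = cscale c w}"

definition op_spectral_radius :: "('a::real_vector \<Rightarrow> 'a) \<Rightarrow> real" where
  "op_spectral_radius T = Sup (cmod ` cspectrum T)"

end

theory Submission
  imports Defs "Jordan_Normal_Form.Spectral_Radius"
begin

text \<open>Let \<open>\<lambda>\<close> be an eigenvalue of \<open>I - LG\<close> with complex eigenvector \<open>w\<close>, so that
  \<open>LGw = (1 - \<lambda>) w\<close>. Taking inner products, \<open>1 - \<lambda> = (Ly, y) / (G\<^sup>-\<^sup>1y, y)\<close> for \<open>y = Gw\<close>
  and \<open>1 / (1 - \<lambda>) = (L\<^sup>-\<^sup>1w, w) / (Gw, w)\<close>. Both quotients lie in numerical ranges, so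
  \<open>1 - \<lambda> = e\<^sup>\<zeta>\<close> for some \<open>\<zeta>\<close> with \<open>|\<zeta>| \<le> d\<close>, where \<open>d\<close> is the smaller of the two spectral
  distances. Then \<open>|\<lambda>| = |e\<^sup>\<zeta> - 1| \<le> e\<^sup>d - 1 \<le> (e\<^sup>\<delta> - 1) d / \<delta>\<close>, the last step by convexity
  of \<open>exp\<close>. Finite dimension enters twice: the spectrum is nonempty, and numerical ranges of
  positive operators lie in a compact annulus, so the spectral distances are genuine suprema.\<close>

unbundle no m_inv_syntax

lemma pos_ops_linear: "T \<in> pos_ops \<Longrightarrow> linear T"
  unfolding pos_ops_def by auto

lemma pos_ops_inner_pos: "T \<in> pos_ops \<Longrightarrow> u \<noteq> 0 \<Longrightarrow> inner (T u) u > 0"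
  unfolding pos_ops_def by auto

lemma pos_ops_inj: "T \<in> pos_ops \<Longrightarrow> inj T"
proof (rule injI)
  fix x y assume T: "T \<in> pos_ops" and "T x = T y"
  then have "T (x - y) = 0" using linear_diff[OF pos_ops_linear[OF T]] by simp
  then show "x = y" using pos_ops_inner_pos[OF T, of "x - y"] by (cases "x = y") auto
qed

lemma pos_ops_inv:
  fixes T :: "'a::euclidean_space \<Rightarrow> 'a"
  assumes T: "T \<in> pos_ops"
  shows "T (inv T x) = x" "inv T (T x) = x" "inv T \<in> pos_ops"
proof -
  obtain T' where T': "linear T'" "\<forall>x. T' (T x) = x" "\<forall>x. T (T' x) = x"
    using linear_injective_isomorphism[OF pos_ops_linear[OF T] pos_ops_inj[OF T]] by blast
  have inv_eq: "inv T = T'"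
    using T' by (metis inv_equality ext)
  show "T (inv T x) = x" "inv T (T x) = x" using T' inv_eq by auto
  have "inner (T' u) u > 0" if "u \<noteq> 0" for u
  proof -
    have "T' u \<noteq> 0" using that T' linear_0[OF pos_ops_linear[OF T]] by metis
    then have "inner (T (T' u)) (T' u) > 0" by (rule pos_ops_inner_pos[OF T])
    then show ?thesis using T' by (simp add: inner_commute)
  qed
  then show "inv T \<in> pos_ops" unfolding pos_ops_def inv_eq using T' by blast
qed

lemma pos_ops_coercive:
  fixes T :: "'a::euclidean_space \<Rightarrow> 'a"
  assumes T: "T \<in> pos_ops"
  shows "\<exists>c>0. \<forall>x. c * (norm x)\<^sup>2 \<le> inner (T x) x"
proof -
  have lin: "linear T" by (rule pos_ops_linear[OF T])
  have cont: "continuous_on (sphere 0 1) (\<lambda>x. inner (T x) x)"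
    using lin by (intro continuous_intros linear_continuous_on) (simp add: linear_conv_bounded_linear)
  obtain b :: 'a where "b \<in> Basis" using nonempty_Basis by blast
  then have "sphere (0::'a) 1 \<noteq> {}" by (metis norm_Basis mem_sphere_0 empty_iff)
  then obtain x0 where x0: "x0 \<in> sphere 0 1" "\<forall>y\<in>sphere 0 1. inner (T x0) x0 \<le> inner (T y) y"
    using continuous_attains_inf[OF compact_sphere _ cont] by blast
  have "inner (T x0) x0 * (norm x)\<^sup>2 \<le> inner (T x) x" for x
  proof (cases "x = 0")
    case True
    then show ?thesis using linear_0[OF lin] by simp
  next
    case False
    define y where "y = x /\<^sub>R norm x"
    have "y \<in> sphere 0 1" using False unfolding y_def by simp
    then have "inner (T x0) x0 * (norm x)\<^sup>2 \<le> inner (T y) y * (norm x)\<^sup>2"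
      using x0(2) by (simp add: mult_right_mono)
    also have "\<dots> = inner (T (norm x *\<^sub>R y)) (norm x *\<^sub>R y)"
      by (simp add: linear_scale[OF lin] power2_eq_square)
    also have "norm x *\<^sub>R y = x" using False unfolding y_def by simp
    finally show ?thesis .
  qed
  moreover have "x0 \<noteq> 0" using x0(1) by auto
  then have "inner (T x0) x0 > 0" by (rule pos_ops_inner_pos[OF T])
  ultimately show ?thesis by blast
qed

section \<open>The complexification\<close>

lemma cplx_op_pos_ops:
  assumes T: "T \<in> pos_ops"
  shows "cplx_op T \<in> pos_ops"
proof -
  have lin: "linear T" by (rule pos_ops_linear[OF T])
  have "linear (cplx_op T)"
    by (rule linearI) (simp_all add: cplx_op_def linear_add[OF lin] linear_scale[OF lin])
  moreover have "inner (cplx_op T w) w > 0" if "w \<noteq> 0" for w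
  proof -
    obtain u v where w: "w = (u, v)" by (cases w)
    have "u \<noteq> 0 \<or> v \<noteq> 0" using that w by (auto simp: zero_prod_def)
    moreover have "inner (T x) x \<ge> 0" for x
      using pos_ops_inner_pos[OF T, of x] linear_0[OF lin] by (cases "x = 0") auto
    ultimately show ?thesis
      using pos_ops_inner_pos[OF T, of u] pos_ops_inner_pos[OF T, of v]
      unfolding w cplx_op_def by (auto simp: add_pos_nonneg add_nonneg_pos)
  qed
  ultimately show ?thesis unfolding pos_ops_def by blast
qed

lemma cinner_eq_Complex_inner: "cinner x y = Complex (inner x y) (inner (snd x, - fst x) y)"
  unfolding cinner_def by (cases x, cases y) simp

lemma cinner_cplx_op_ne_0:
  assumes "T \<in> pos_ops" "w \<noteq> (0, 0)"
  shows "cinner (cplx_op T w) w \<noteq> 0"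
  using pos_ops_inner_pos[OF cplx_op_pos_ops[OF assms(1)], of w] assms(2)
  by (auto simp: cinner_eq_Complex_inner zero_prod_def complex_eq_iff)

lemma cplx_op_cscale: "linear T \<Longrightarrow> cplx_op T (cscale c w) = cscale c (cplx_op T w)"
  unfolding cplx_op_def cscale_def by (simp add: linear_diff linear_add linear_scale)

lemma cinner_cscale_left: "cinner (cscale c x) y = c * cinner x y"
  unfolding cinner_def cscale_def
  by (simp add: complex_eq_iff inner_diff_left inner_add_left algebra_simps)

lemma cmod_cinner_le: "cmod (cinner x y) \<le> 2 * norm x * norm y"
proof -
  have "norm (snd x, - fst x) = norm x"
    by (cases x) (simp add: norm_Pair add.commute)
  then have "\<bar>inner (snd x, - fst x) y\<bar> \<le> norm x * norm y"
    by (metis Cauchy_Schwarz_ineq2)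
  moreover have "\<bar>inner x y\<bar> \<le> norm x * norm y" by (rule Cauchy_Schwarz_ineq2)
  ultimately show ?thesis
    using cmod_le[of "cinner x y"] unfolding cinner_eq_Complex_inner by simp
qed

lemma cinner_pos_ops_bounds:
  fixes P :: "'a::euclidean_space \<times> 'a \<Rightarrow> 'a \<times> 'a"
  assumes P: "P \<in> pos_ops"
  obtains c C where "c > 0" "C > 0"
    "\<And>w. c * (norm w)\<^sup>2 \<le> cmod (cinner (P w) w)" "\<And>w. cmod (cinner (P w) w) \<le> C * (norm w)\<^sup>2"
proof -
  obtain c where c: "c > 0" "\<And>w. c * (norm w)\<^sup>2 \<le> inner (P w) w"
    using pos_ops_coercive[OF P] by blast
  obtain B where B: "B > 0" "\<And>w. norm (P w) \<le> norm w * B"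
    using bounded_linear.pos_bounded pos_ops_linear[OF P] linear_conv_bounded_linear by blast
  have lower: "c * (norm w)\<^sup>2 \<le> cmod (cinner (P w) w)" for w
    using c(2)[of w] complex_Re_le_cmod[of "cinner (P w) w"]
    unfolding cinner_eq_Complex_inner by simp
  have upper: "cmod (cinner (P w) w) \<le> 2 * B * (norm w)\<^sup>2" for w
  proof -
    have "cmod (cinner (P w) w) \<le> 2 * norm (P w) * norm w" by (rule cmod_cinner_le)
    also have "\<dots> \<le> 2 * (norm w * B) * norm w"
      using B(2)[of w] by (simp add: mult_right_mono)
    finally show ?thesis by (simp add: power2_eq_square mult_ac)
  qed
  show ?thesis by (rule that[of c "2 * B"]) (use c(1) B(1) lower upper in auto)
qed

section \<open>Numerical ranges and spectral distance\<close>

lemma num_range_annulus: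
  fixes S T :: "'a::euclidean_space \<Rightarrow> 'a"
  assumes S: "S \<in> pos_ops" and T: "T \<in> pos_ops"
  obtains m M where "m > 0" "\<And>z. z \<in> num_range S T \<Longrightarrow> m \<le> cmod z \<and> cmod z \<le> M"
proof -
  obtain cS CS where S: "cS > 0" "CS > 0" "\<And>w. cS * (norm w)\<^sup>2 \<le> cmod (cinner (cplx_op S w) w)"
      "\<And>w. cmod (cinner (cplx_op S w) w) \<le> CS * (norm w)\<^sup>2"
    using cinner_pos_ops_bounds[OF cplx_op_pos_ops[OF S]] by blast
  obtain cT CT where T: "cT > 0" "CT > 0" "\<And>w. cT * (norm w)\<^sup>2 \<le> cmod (cinner (cplx_op T w) w)"
      "\<And>w. cmod (cinner (cplx_op T w) w) \<le> CT * (norm w)\<^sup>2"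
    using cinner_pos_ops_bounds[OF cplx_op_pos_ops[OF T]] by blast
  have "cS / CT \<le> cmod z \<and> cmod z \<le> CS / cT" if z_in: "z \<in> num_range S T" for z
  proof -
    obtain w where z: "z = cinner (cplx_op S w) w / cinner (cplx_op T w) w" and "w \<noteq> (0, 0)"
      using z_in unfolding num_range_def by blast
    then have N: "(norm w)\<^sup>2 > 0" by (simp add: zero_prod_def)
    have q_pos: "0 < cmod (cinner (cplx_op T w) w)"
      using order_less_le_trans[OF mult_pos_pos[OF T(1) N] T(3)] .
    have "cS / CT = (cS * (norm w)\<^sup>2) / (CT * (norm w)\<^sup>2)" using N by simp
    also have "\<dots> \<le> cmod z"
      unfolding z norm_divide using S(1) N q_pos S(3) T(4) by (intro frac_le) auto
    finally have lower: "cS / CT \<le> cmod z" .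
    have "cmod z \<le> (CS * (norm w)\<^sup>2) / (cT * (norm w)\<^sup>2)"
      unfolding z norm_divide using N S(2) T(1) T(3) S(4) by (intro frac_le) auto
    also have "\<dots> = CS / cT" using N by simp
    finally show ?thesis using lower by blast
  qed
  then show ?thesis using that[of "cS / CT" "CS / cT"] S(1) T(2) by auto
qed

lemma zero_notin_num_range: "S \<in> pos_ops \<Longrightarrow> T \<in> pos_ops \<Longrightarrow> 0 \<notin> num_range S T"
  unfolding num_range_def using cinner_cplx_op_ne_0 by fastforce

lemma bdd_above_norm_Ln_num_range:
  fixes S T :: "'a::euclidean_space \<Rightarrow> 'a"
  assumes S: "S \<in> pos_ops" and T: "T \<in> pos_ops"
  shows "bdd_above ((\<lambda>z. cmod (Ln z)) ` num_range S T)"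
proof -
  obtain m M where m: "m > 0" and mM: "\<And>z. z \<in> num_range S T \<Longrightarrow> m \<le> cmod z \<and> cmod z \<le> M"
    using num_range_annulus[OF S T] by blast
  have "cmod (Ln z) \<le> \<bar>ln m\<bar> + \<bar>ln M\<bar> + pi" if z: "z \<in> num_range S T" for z
  proof -
    have z0: "z \<noteq> 0" using mM[OF z] m by auto
    have "0 < cmod z" "0 < M" using mM[OF z] m by auto
    then have "ln m \<le> ln (cmod z)" "ln (cmod z) \<le> ln M"
      using mM[OF z] m by (simp_all add: ln_le_cancel_iff)
    moreover have "\<bar>Im (Ln z)\<bar> \<le> pi" using mpi_less_Im_Ln[OF z0] Im_Ln_le_pi[OF z0] by auto
    ultimately show ?thesis using cmod_le[of "Ln z"] z0 by simp
  qed
  then show ?thesis unfolding bdd_above_def by blast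
qed

lemma norm_Ln_le_spec_dist:
  fixes S T :: "'a::euclidean_space \<Rightarrow> 'a"
  assumes "S \<in> pos_ops" "T \<in> pos_ops" "z \<in> num_range S T"
  shows "cmod (Ln z) \<le> spec_dist S T"
  unfolding spec_dist_def using assms bdd_above_norm_Ln_num_range by (intro cSup_upper) auto

lemma num_range_memI:
  assumes "T \<in> pos_ops" "w \<noteq> (0, 0)"
    and "cinner (cplx_op S w) w = z * cinner (cplx_op T w) w"
  shows "z \<in> num_range S T"
proof -
  have "z = cinner (cplx_op S w) w / cinner (cplx_op T w) w"
    using assms cinner_cplx_op_ne_0[OF assms(1,2)] by simp
  then show ?thesis unfolding num_range_def using assms(2) by blast
qed

lemma cspectrum_id_minus_comp:
  fixes L G :: "'a::euclidean_space \<Rightarrow> 'a"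
  assumes L: "L \<in> pos_ops" and G: "G \<in> pos_ops" and lam: "lam \<in> cspectrum (\<lambda>x. x - L (G x))"
  shows "1 - lam \<in> num_range L (inv G)" "inverse (1 - lam) \<in> num_range (inv L) G"
proof -
  obtain w where w: "w \<noteq> (0, 0)" "cplx_op (\<lambda>x. x - L (G x)) w = cscale lam w"
    using lam unfolding cspectrum_def by blast
  have LGw: "cplx_op L (cplx_op G w) = cscale (1 - lam) w"
    using w(2) by (cases w) (auto simp: cplx_op_def cscale_def algebra_simps)
  define y where "y = cplx_op G w"
  have w_eq: "w = cplx_op (inv G) y"
    unfolding y_def cplx_op_def by (simp add: pos_ops_inv(2)[OF G])
  then have y: "y \<noteq> (0, 0)"
    using w(1) linear_0[OF pos_ops_linear[OF pos_ops_inv(3)[OF G]]] by (auto simp: cplx_op_def)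
  have "cinner (cplx_op L y) y = (1 - lam) * cinner (cplx_op (inv G) y) y"
    using LGw w_eq unfolding y_def by (simp add: cinner_cscale_left)
  then show "1 - lam \<in> num_range L (inv G)"
    by (rule num_range_memI[OF pos_ops_inv(3)[OF G] y])
  have "cplx_op G w = cplx_op (inv L) (cplx_op L (cplx_op G w))"
    unfolding cplx_op_def by (simp add: pos_ops_inv(2)[OF L])
  also have "\<dots> = cscale (1 - lam) (cplx_op (inv L) w)"
    using LGw cplx_op_cscale[OF pos_ops_linear[OF pos_ops_inv(3)[OF L]]] by simp
  finally have Gw: "cinner (cplx_op G w) w = (1 - lam) * cinner (cplx_op (inv L) w) w"
    by (simp add: cinner_cscale_left)
  moreover have "cinner (cplx_op G w) w \<noteq> 0" by (rule cinner_cplx_op_ne_0[OF G w(1)])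
  ultimately have "1 - lam \<noteq> 0" by auto
  then have "cinner (cplx_op (inv L) w) w = inverse (1 - lam) * cinner (cplx_op G w) w"
    by (simp add: Gw mult.assoc[symmetric])
  then show "inverse (1 - lam) \<in> num_range (inv L) G"
    by (rule num_range_memI[OF G w(1)])
qed

section \<open>Nonemptiness of the spectrum\<close>

lemma inner_sum_Basis_nth:
  fixes bs :: "'a::euclidean_space list"
  assumes bs: "distinct bs" "set bs = Basis" and i: "i < length bs"
  shows "inner (\<Sum>j<length bs. c j *\<^sub>R bs!j) (bs!i) = c i"
proof -
  have "inner (\<Sum>j<length bs. c j *\<^sub>R bs!j) (bs!i) = (\<Sum>j<length bs. c j * inner (bs!j) (bs!i))"
    by (simp add: inner_sum_left)
  also have "\<dots> = (\<Sum>j<length bs. if j = i then c i else 0)"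
  proof (rule sum.cong[OF refl])
    fix j assume "j \<in> {..<length bs}"
    then have j: "j < length bs" by simp
    then have "bs!j \<in> Basis" "bs!i \<in> Basis" "bs!j = bs!i \<longleftrightarrow> j = i"
      using bs i nth_mem nth_eq_iff_index_eq[OF bs(1) j i] by auto
    then show "c j * inner (bs!j) (bs!i) = (if j = i then c i else 0)"
      by (simp add: inner_Basis)
  qed
  also have "\<dots> = c i" using i by simp
  finally show ?thesis .
qed

text \<open>A complex eigenvector \<open>v\<close> of the matrix of \<open>T\<close> in an orthonormal basis yields the
  eigenvector \<open>(u, w)\<close> of the complexification, with \<open>u\<close> and \<open>w\<close> assembled from the real and
  imaginary parts of the coordinates of \<open>v\<close>.\<close>

lemma cspectrum_nonempty:
  fixes T :: "'a::euclidean_space \<Rightarrow> 'a"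
  assumes lin: "linear T"
  shows "cspectrum T \<noteq> {}"
proof -
  obtain bs :: "'a list" where bs: "distinct bs" "set bs = Basis"
    using finite_distinct_list[OF finite_Basis] by blast
  define n where "n = length bs"
  have "n > 0" using bs(2) nonempty_Basis unfolding n_def by (metis length_greater_0_conv set_empty)
  define A where "A = mat n n (\<lambda>(i, j). complex_of_real (inner (T (bs!j)) (bs!i)))"
  have A: "A \<in> carrier_mat n n" unfolding A_def by simp
  obtain k where "eigenvalue A k"
    using spectrum_non_empty[OF A \<open>n > 0\<close>] unfolding spectrum_def by auto
  then obtain v where v: "v \<in> carrier_vec n" "v \<noteq> 0\<^sub>v n" "A *\<^sub>v v = k \<cdot>\<^sub>v v"
    unfolding eigenvalue_def eigenvector_def using A by auto
  define u where "u = (\<Sum>j<n. Re (vec_index v j) *\<^sub>R bs!j)"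
  define w where "w = (\<Sum>j<n. Im (vec_index v j) *\<^sub>R bs!j)"
  have u_coord: "inner u (bs!i) = Re (vec_index v i)" and w_coord: "inner w (bs!i) = Im (vec_index v i)"
    if "i < n" for i
    unfolding u_def w_def n_def using inner_sum_Basis_nth[OF bs] that n_def by auto
  have T_coord: "inner (T (\<Sum>j<n. c j *\<^sub>R bs!j)) (bs!i) = (\<Sum>j<n. c j * inner (T (bs!j)) (bs!i))"
    for c i by (simp add: linear_sum[OF lin] linear_scale[OF lin] inner_sum_left)
  have Av: "(\<Sum>j<n. complex_of_real (inner (T (bs!j)) (bs!i)) * vec_index v j) = k * vec_index v i"
    if "i < n" for i
    using arg_cong[OF v(3), of "\<lambda>x. vec_index x i"] that v(1) A
    unfolding A_def by (simp add: scalar_prod_def row_def atLeast0LessThan)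
  have Tu_coord: "inner (T u) (bs!i) = Re (k * vec_index v i)" if "i < n" for i
  proof -
    have "inner (T u) (bs!i) = (\<Sum>j<n. Re (vec_index v j) * inner (T (bs!j)) (bs!i))"
      unfolding u_def by (rule T_coord)
    also have "\<dots> = Re (k * vec_index v i)"
      unfolding Av[OF that, symmetric] by (simp add: Re_sum mult.commute)
    finally show ?thesis .
  qed
  have Tw_coord: "inner (T w) (bs!i) = Im (k * vec_index v i)" if "i < n" for i
  proof -
    have "inner (T w) (bs!i) = (\<Sum>j<n. Im (vec_index v j) * inner (T (bs!j)) (bs!i))"
      unfolding w_def by (rule T_coord)
    also have "\<dots> = Im (k * vec_index v i)"
      unfolding Av[OF that, symmetric] by (simp add: Im_sum mult.commute)
    finally show ?thesis .
  qed
  have Basis_nth: "\<exists>i<n. b = bs!i" if "b \<in> Basis" for b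
    using that bs(2) unfolding n_def by (metis in_set_conv_nth)
  have "T u = Re k *\<^sub>R u - Im k *\<^sub>R w"
  proof (rule euclidean_eqI)
    fix b :: 'a assume "b \<in> Basis"
    then obtain i where "i < n" "b = bs!i" using Basis_nth by blast
    then show "inner (T u) b = inner (Re k *\<^sub>R u - Im k *\<^sub>R w) b"
      using Tu_coord u_coord w_coord by (simp add: inner_diff_left)
  qed
  moreover have "T w = Re k *\<^sub>R w + Im k *\<^sub>R u"
  proof (rule euclidean_eqI)
    fix b :: 'a assume "b \<in> Basis"
    then obtain i where "i < n" "b = bs!i" using Basis_nth by blast
    then show "inner (T w) b = inner (Re k *\<^sub>R w + Im k *\<^sub>R u) b"
      using Tw_coord u_coord w_coord by (simp add: inner_add_left)
  qed
  ultimately have "cplx_op T (u, w) = cscale k (u, w)"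
    unfolding cplx_op_def cscale_def by simp
  moreover have "(u, w) \<noteq> (0, 0)"
  proof
    assume "(u, w) = (0, 0)"
    then have "vec_index v i = 0" if "i < n" for i
      using u_coord[OF that] w_coord[OF that] by (simp add: complex_eq_iff)
    then have "v = 0\<^sub>v n" using v(1) by (intro eq_vecI) auto
    with v(2) show False by simp
  qed
  ultimately show ?thesis unfolding cspectrum_def by blast
qed

section \<open>The exponential estimate\<close>

lemma norm_exp_minus_1_le:
  fixes z :: "'a::{real_normed_algebra_1, banach}"
  shows "norm (exp z - 1) \<le> exp (norm z) - 1"
proof -
  have series: "(\<lambda>n. z ^ Suc n /\<^sub>R fact (Suc n)) sums (exp z - 1)"
    using exp_converges[of z] by (subst sums_Suc_iff) simp
  have norm_series: "(\<lambda>n. norm z ^ Suc n /\<^sub>R fact (Suc n)) sums (exp (norm z) - 1)"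
    using exp_converges[of "norm z"] by (subst sums_Suc_iff) simp
  have "norm (z ^ Suc n /\<^sub>R fact (Suc n)) \<le> norm z ^ Suc n /\<^sub>R fact (Suc n)" for n
    using norm_power_ineq[of z "Suc n"] by (simp del: power_Suc add: divide_right_mono)
  from norm_suminf_le[OF this sums_summable[OF norm_series]]
  show ?thesis unfolding sums_unique[OF series, symmetric] sums_unique[OF norm_series, symmetric] .
qed

lemma exp_minus_1_le_chord:
  fixes t \<delta> :: real
  assumes "\<delta> > 0" "0 \<le> t" "t \<le> \<delta>"
  shows "exp t - 1 \<le> (exp \<delta> - 1) / \<delta> * t"
proof -
  have "exp ((1 - t/\<delta>) * 0 + (t/\<delta>) * \<delta>) \<le> (1 - t/\<delta>) * exp 0 + (t/\<delta>) * exp \<delta>"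
    using convex_onD[OF exp_convex, of "t/\<delta>" 0 \<delta>] assms by simp
  moreover have "(exp \<delta> - 1) / \<delta> * t = t / \<delta> * exp \<delta> - t / \<delta>"
    by (simp add: diff_divide_distrib left_diff_distrib)
  ultimately show ?thesis using assms by simp
qed

lemma norm_exp_minus_1_le_chord:
  fixes \<zeta> :: complex
  assumes "\<delta> > 0" "cmod \<zeta> \<le> d" "d \<le> \<delta>"
  shows "cmod (exp \<zeta> - 1) \<le> (exp \<delta> - 1) / \<delta> * d"
proof -
  have "cmod (exp \<zeta> - 1) \<le> exp (cmod \<zeta>) - 1" by (rule norm_exp_minus_1_le)
  also have "\<dots> \<le> exp d - 1" using assms(2) by simp
  also have "\<dots> \<le> (exp \<delta> - 1) / \<delta> * d"
    by (rule exp_minus_1_le_chord[OF assms(1) order_trans[OF norm_ge_zero assms(2)] assms(3)])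
  finally show ?thesis .
qed

lemma cspectrum_id_minus_comp_bound:
  fixes L G :: "'a::euclidean_space \<Rightarrow> 'a"
  assumes "\<delta> > 0" and L: "L \<in> pos_ops" and G: "G \<in> pos_ops"
    and d: "min (spec_dist (inv L) G) (spec_dist L (inv G)) \<le> \<delta>"
    and lam: "lam \<in> cspectrum (\<lambda>x. x - L (G x))"
  shows "cmod lam \<le> (exp \<delta> - 1) / \<delta> * min (spec_dist (inv L) G) (spec_dist L (inv G))"
proof -
  note in_num_range = cspectrum_id_minus_comp[OF L G lam]
  have "1 - lam \<noteq> 0"
    using in_num_range(1) zero_notin_num_range[OF L pos_ops_inv(3)[OF G]] by auto
  \<comment> \<open>\<open>- Ln (inverse z)\<close> is a logarithm of \<open>z\<close>, though not always the principal one\<close>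
  have exp1: "exp (- Ln (inverse (1 - lam))) = 1 - lam" and exp2: "exp (Ln (1 - lam)) = 1 - lam"
    using \<open>1 - lam \<noteq> 0\<close> by (simp_all add: exp_minus)
  have bound1: "cmod (- Ln (inverse (1 - lam))) \<le> spec_dist (inv L) G"
    using norm_Ln_le_spec_dist[OF pos_ops_inv(3)[OF L] G in_num_range(2)] by simp
  have bound2: "cmod (Ln (1 - lam)) \<le> spec_dist L (inv G)"
    by (rule norm_Ln_le_spec_dist[OF L pos_ops_inv(3)[OF G] in_num_range(1)])
  obtain \<zeta> where \<zeta>: "exp \<zeta> = 1 - lam"
      "cmod \<zeta> \<le> min (spec_dist (inv L) G) (spec_dist L (inv G))"
  proof (cases "spec_dist (inv L) G \<le> spec_dist L (inv G)")
    case True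
    then show ?thesis using that[OF exp1] bound1 by (simp add: min_def)
  next
    case False
    then show ?thesis using that[OF exp2] bound2 by (simp add: min_def)
  qed
  then have "cmod lam = cmod (exp \<zeta> - 1)" by (simp add: norm_minus_commute)
  also have "\<dots> \<le> (exp \<delta> - 1) / \<delta> * min (spec_dist (inv L) G) (spec_dist L (inv G))"
    by (rule norm_exp_minus_1_le_chord[OF \<open>\<delta> > 0\<close> \<zeta>(2) d])
  finally show ?thesis .
qed

theorem lemmaA2:
  fixes L G :: "'a::euclidean_space \<Rightarrow> 'a" and \<delta> :: real
  assumes "\<delta> > 0"
    and "L \<in> pos_ops" and "G \<in> pos_ops"
    and "min (spec_dist (inv L) G) (spec_dist L (inv G)) \<le> \<delta>"
  shows "op_spectral_radius (\<lambda>x. x - L (G x))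
           \<le> (exp \<delta> - 1) / \<delta> * min (spec_dist (inv L) G) (spec_dist L (inv G))"
proof -
  have "linear (\<lambda>x. x - L (G x))"
    using linear_compose_sub[OF linear_id linear_compose[of G L]] assms(2,3)
    by (simp add: pos_ops_linear o_def id_def)
  then have "cspectrum (\<lambda>x. x - L (G x)) \<noteq> {}" by (rule cspectrum_nonempty)
  then show ?thesis
    unfolding op_spectral_radius_def
    using cspectrum_id_minus_comp_bound[OF assms] by (intro cSup_least) auto
qed

end
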